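(* Let $n\geq 2$ and let $G$ be a group of type $MC(n)$. Then for every homomorphism $\psi$ from $G$ to the group of orientation-preserving $C^2$ diffeomorphisms of a compact interval $I$, the image $\psi(G)$ is abelian.
   Context: A group $G$ is of type $MC(n)$ if it is nonabelian and has a generating set $\{a_i,b_i\}_{i=1}^n\cup\{c_j\}_{j=1}^{n-1}$ satisfying: (1) $a_ia_j=a_ja_i$, $b_ib_j=b_jb_i$, $c_ic_j=c_jc_i$, $a_ic_j=c_ja_i$ for all $i,j$; (2) $a_ib_j=b_ja_i$ if $i\neq j$; (3) $b_ic_j=c_jb_i$ if $j\neq i,i-1$; (4) $a_ib_ia_i=b_ia_ib_i$ for $1\le i\le n$, and $b_ic_jb_i=c_jb_ic_j$ whenever $j=i$ or $j=i-1$. *)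

theory Defs
  imports "HOL-Analysis.Analysis" "HOL-Algebra.Algebra"
begin

definition is_MC_generating :: "('g, 'm) monoid_scheme \<Rightarrow> nat \<Rightarrow>
    (nat \<Rightarrow> 'g) \<Rightarrow> (nat \<Rightarrow> 'g) \<Rightarrow> (nat \<Rightarrow> 'g) \<Rightarrow> bool" where
  "is_MC_generating G n a b c \<longleftrightarrow>
     a ` {1..n} \<subseteq> carrier G \<and> b ` {1..n} \<subseteq> carrier G \<and> c ` {1..n-1} \<subseteq> carrier G \<and>
     generate G (a ` {1..n} \<union> b ` {1..n} \<union> c ` {1..n-1}) = carrier G \<and>
     (\<forall>i\<in>{1..n}. \<forall>j\<in>{1..n}. a i \<otimes>\<^bsub>G\<^esub> a j = a j \<otimes>\<^bsub>G\<^esub> a i) \<and>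
     (\<forall>i\<in>{1..n}. \<forall>j\<in>{1..n}. b i \<otimes>\<^bsub>G\<^esub> b j = b j \<otimes>\<^bsub>G\<^esub> b i) \<and>
     (\<forall>i\<in>{1..n-1}. \<forall>j\<in>{1..n-1}. c i \<otimes>\<^bsub>G\<^esub> c j = c j \<otimes>\<^bsub>G\<^esub> c i) \<and>
     (\<forall>i\<in>{1..n}. \<forall>j\<in>{1..n-1}. a i \<otimes>\<^bsub>G\<^esub> c j = c j \<otimes>\<^bsub>G\<^esub> a i) \<and>
     (\<forall>i\<in>{1..n}. \<forall>j\<in>{1..n}. i \<noteq> j \<longrightarrow> a i \<otimes>\<^bsub>G\<^esub> b j = b j \<otimes>\<^bsub>G\<^esub> a i) \<and>
     (\<forall>i\<in>{1..n}. \<forall>j\<in>{1..n-1}. j \<noteq> i \<and> j \<noteq> i - 1 \<longrightarrow>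
         b i \<otimes>\<^bsub>G\<^esub> c j = c j \<otimes>\<^bsub>G\<^esub> b i) \<and>
     (\<forall>i\<in>{1..n}. a i \<otimes>\<^bsub>G\<^esub> b i \<otimes>\<^bsub>G\<^esub> a i = b i \<otimes>\<^bsub>G\<^esub> a i \<otimes>\<^bsub>G\<^esub> b i) \<and>
     (\<forall>i\<in>{1..n}. \<forall>j\<in>{1..n-1}. (j = i \<or> j = i - 1) \<longrightarrow>
         b i \<otimes>\<^bsub>G\<^esub> c j \<otimes>\<^bsub>G\<^esub> b i = c j \<otimes>\<^bsub>G\<^esub> b i \<otimes>\<^bsub>G\<^esub> c j)"

definition type_MC :: "('g, 'm) monoid_scheme \<Rightarrow> nat \<Rightarrow> bool" where
  "type_MC G n \<longleftrightarrow> group G \<and>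
     (\<exists>x\<in>carrier G. \<exists>y\<in>carrier G. x \<otimes>\<^bsub>G\<^esub> y \<noteq> y \<otimes>\<^bsub>G\<^esub> x) \<and>
     (\<exists>a b c. is_MC_generating G n a b c)"

definition C2_on :: "real set \<Rightarrow> (real \<Rightarrow> real) \<Rightarrow> bool" where
  "C2_on I f \<longleftrightarrow> (\<exists>f' f''. (\<forall>x\<in>I. (f has_real_derivative f' x) (at x within I) \<and>
       (f' has_real_derivative f'' x) (at x within I)) \<and> continuous_on I f'')"

text \<open>Orientation-preserving C^2 diffeomorphisms of [l,r], extended by the identity
  outside [l,r] so that they form a group under composition.\<close>
definition diff2_plus :: "real \<Rightarrow> real \<Rightarrow> (real \<Rightarrow> real) \<Rightarrow> bool" where
  "diff2_plus l r f \<longleftrightarrow> bij_betw f {l..r} {l..r} \<and> strict_mono_on {l..r} f \<and>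
     C2_on {l..r} f \<and> C2_on {l..r} (inv_into {l..r} f) \<and> (\<forall>x. x \<notin> {l..r} \<longrightarrow> f x = x)"

definition Diff2_plus :: "real \<Rightarrow> real \<Rightarrow> (real \<Rightarrow> real) monoid" where
  "Diff2_plus l r = \<lparr>carrier = {f. diff2_plus l r f}, mult = (\<lambda>f g. f \<circ> g), one = id\<rparr>"

end

theory Submission
  imports Defs
begin

(*
  Thurston stability: let every homomorphism from <S> to (R, +) vanish on a finite set S of
  orientation-preserving C^1 diffeomorphisms of [l, r], and suppose some s in S moves a point q.
  Let p be the last common fixed point of S left of q.  By the chain rule g |-> log g'(p) is such a
  homomorphism, so every element of <S> is tangent to the identity at p.  Then the displacements
  g(y) - y at points y tending to p from the right, divided by their total size over S, converge
  along a subsequence to a homomorphism <S> -> R which is nonzero on S: a contradiction.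

  This applies to the quotients x_i x_j^-1 of an A_5 chain x_1, ..., x_5: if u and v braid and both
  commute with w, then u w^-1 and v w^-1 braid, so every homomorphism to R takes the same value on
  them.  Hence the action is constant on each chain a_i, b_i, c_i, b_(i+1), a_(i+1) of generators of
  an MC(n) group, all generators act by the same diffeomorphism, and the image is cyclic.
*)

section \<open>Derivatives of interval diffeomorphisms\<close>

lemma diff2_plus_image: "diff2_plus l r f \<Longrightarrow> f ` {l..r} = {l..r}"
  unfolding diff2_plus_def bij_betw_def by blast

lemma diff2_plus_fixes_outside: "diff2_plus l r f \<Longrightarrow> x \<notin> {l..r} \<Longrightarrow> f x = x"
  unfolding diff2_plus_def by blast

lemma diff2_plus_inj:
  assumes "diff2_plus l r f"
  shows "inj f"
proof (rule injI)
  fix x y assume "f x = f y"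
  moreover have "inj_on f {l..r}"
    using assms unfolding diff2_plus_def bij_betw_def by blast
  moreover have "f z \<in> {l..r} \<longleftrightarrow> z \<in> {l..r}" for z
    using diff2_plus_image[OF assms] diff2_plus_fixes_outside[OF assms] by (metis image_eqI)
  ultimately show "x = y"
    using diff2_plus_fixes_outside[OF assms] by (metis inj_onD)
qed

lemma diff2_plus_fixes_left:
  assumes f: "diff2_plus l r f" and "l \<le> r"
  shows "f l = l"
proof -
  obtain y where y: "y \<in> {l..r}" "f y = l"
    using diff2_plus_image[OF f] \<open>l \<le> r\<close> by (metis atLeastAtMost_iff imageE order_refl)
  have "f l \<in> {l..r}"
    using diff2_plus_image[OF f] \<open>l \<le> r\<close> by auto
  moreover have "y = l"
  proof (rule ccontr)
    assume "y \<noteq> l"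
    with y f \<open>l \<le> r\<close> have "f l < f y"
      unfolding diff2_plus_def strict_mono_on_def by auto
    with y \<open>f l \<in> {l..r}\<close> show False by simp
  qed
  ultimately show ?thesis using y by simp
qed

lemma C2_on_imp_continuous_derivative:
  assumes "C2_on I f"
  obtains f' where "\<And>x. x \<in> I \<Longrightarrow> (f has_real_derivative f' x) (at x within I)"
    and "continuous_on I f'"
proof -
  obtain f' f'' where
    "\<forall>x\<in>I. (f has_real_derivative f' x) (at x within I) \<and> (f' has_real_derivative f'' x) (at x within I)"
    using assms unfolding C2_on_def by blast
  then show thesis
    using that DERIV_continuous continuous_on_eq_continuous_within by metis
qed

definition interval_deriv :: "real \<Rightarrow> real \<Rightarrow> (real \<Rightarrow> real) \<Rightarrow> real \<Rightarrow> real" where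
  "interval_deriv l r f x = vector_derivative f (at x within {l..r})"

lemma interval_derivI:
  assumes "l < r" "x \<in> {l..r}" "(f has_real_derivative d) (at x within {l..r})"
  shows "interval_deriv l r f x = d"
  using vector_derivative_within_closed_interval assms
  unfolding interval_deriv_def has_real_derivative_iff_has_vector_derivative by blast

lemma diff2_plus_has_interval_deriv:
  assumes "l < r" "diff2_plus l r f" "x \<in> {l..r}"
  shows "(f has_real_derivative interval_deriv l r f x) (at x within {l..r})"
proof -
  obtain f' where "\<And>x. x \<in> {l..r} \<Longrightarrow> (f has_real_derivative f' x) (at x within {l..r})"
    using assms(2) C2_on_imp_continuous_derivative unfolding diff2_plus_def by blast
  then show ?thesis
    using interval_derivI[OF assms(1,3)] assms(3) by metis
qed

lemma continuous_on_interval_deriv: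
  assumes "l < r" "diff2_plus l r f"
  shows "continuous_on {l..r} (interval_deriv l r f)"
proof -
  obtain f' where "\<And>x. x \<in> {l..r} \<Longrightarrow> (f has_real_derivative f' x) (at x within {l..r})"
    and "continuous_on {l..r} f'"
    using assms(2) C2_on_imp_continuous_derivative unfolding diff2_plus_def by blast
  then show ?thesis
    using interval_derivI[OF assms(1)] continuous_on_cong by metis
qed

lemma diff2_plus_continuous_on: "l < r \<Longrightarrow> diff2_plus l r f \<Longrightarrow> continuous_on {l..r} f"
  using diff2_plus_has_interval_deriv
  by (meson DERIV_continuous continuous_on_eq_continuous_within)

lemma interval_deriv_comp:
  assumes "l < r" "diff2_plus l r f" "diff2_plus l r g" "x \<in> {l..r}"
  shows "interval_deriv l r (f \<circ> g) x = interval_deriv l r f (g x) * interval_deriv l r g x"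
proof (rule interval_derivI[OF assms(1,4)])
  have "(f has_real_derivative interval_deriv l r f (g x)) (at (g x) within g ` {l..r})"
    using diff2_plus_has_interval_deriv[OF assms(1,2)] diff2_plus_image[OF assms(3)] assms(4)
    by (metis imageI)
  then show "((f \<circ> g) has_real_derivative interval_deriv l r f (g x) * interval_deriv l r g x)
      (at x within {l..r})"
    using DERIV_image_chain diff2_plus_has_interval_deriv[OF assms(1,3,4)] by blast
qed

lemma interval_deriv_id: "l < r \<Longrightarrow> x \<in> {l..r} \<Longrightarrow> interval_deriv l r id x = 1"
  by (rule interval_derivI) (auto simp: id_def)

lemma interval_deriv_nonneg:
  assumes "l < r" "diff2_plus l r f" "x \<in> {l..r}"
  shows "0 \<le> interval_deriv l r f x"
proof -
  have "at x within {l..r} \<noteq> bot"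
    using assms(1,3) trivial_limit_within islimpt_Icc by blast
  moreover have "\<forall>\<^sub>F y in at x within {l..r}. 0 \<le> (f y - f x) / (y - x)"
  proof -
    have "0 \<le> (f y - f x) / (y - x)" if "y \<in> {l..r}" "y \<noteq> x" for y
    proof (cases "y < x")
      case True
      then have "f y < f x"
        using that assms(2,3) unfolding diff2_plus_def strict_mono_on_def by blast
      with True show ?thesis by (simp add: divide_nonpos_neg)
    next
      case False
      with that have "f x < f y"
        using assms(2,3) unfolding diff2_plus_def strict_mono_on_def by auto
      with False show ?thesis by simp
    qed
    then show ?thesis
      unfolding eventually_at_filter by (simp add: always_eventually)
  qed
  ultimately show ?thesis
    using diff2_plus_has_interval_deriv[OF assms] tendsto_lowerbound
    unfolding has_field_derivative_iff by blast
qed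

lemma interval_deriv_mvt:
  assumes "l < r" "diff2_plus l r f" "a \<in> {l..r}" "b \<in> {l..r}"
  shows "\<exists>\<xi>\<in>{min a b..max a b}. f b - f a = interval_deriv l r f \<xi> * (b - a)"
proof -
  have mvt: "\<exists>\<xi>\<in>{u..v}. f v - f u = interval_deriv l r f \<xi> * (v - u)"
    if "u \<le> v" "u \<in> {l..r}" "v \<in> {l..r}" for u v
  proof -
    have "(f has_derivative (*) (interval_deriv l r f x)) (at x within {u..v})" if "u \<le> x" "x \<le> v" for x
      using diff2_plus_has_interval_deriv[OF assms(1,2), of x] \<open>u \<in> {l..r}\<close> \<open>v \<in> {l..r}\<close> that
      unfolding has_field_derivative_def by (auto intro: has_derivative_subset)
    from mvt_very_simple[OF \<open>u \<le> v\<close> this] show ?thesis by (auto simp: mult.commute)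
  qed
  show ?thesis
  proof (cases "a \<le> b")
    case True
    then show ?thesis using mvt[OF True assms(3,4)] by simp
  next
    case False
    then obtain \<xi> where "\<xi> \<in> {b..a}" "f a - f b = interval_deriv l r f \<xi> * (a - b)"
      using mvt[of b a] assms(3,4) by auto
    with False show ?thesis by (intro bexI[of _ \<xi>]) (auto simp: algebra_simps)
  qed
qed

section \<open>Actions on an interval\<close>

lemma finite_family_convergent_subseq:
  fixes u :: "'a \<Rightarrow> nat \<Rightarrow> 'b::heine_borel"
  assumes "finite S" "\<And>s. s \<in> S \<Longrightarrow> bounded (range (u s))"
  obtains \<rho> where "strict_mono \<rho>" "\<And>s. s \<in> S \<Longrightarrow> convergent (u s \<circ> \<rho>)"
  using assms
proof (induction S arbitrary: thesis rule: finite_induct)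
  case empty
  then show ?case using strict_mono_id by (metis empty_iff)
next
  case (insert s S)
  obtain \<rho>1 where \<rho>1: "strict_mono \<rho>1" "\<And>t. t \<in> S \<Longrightarrow> convergent (u t \<circ> \<rho>1)"
    using insert.IH insert.prems(2) by blast
  have "range (u s \<circ> \<rho>1) \<subseteq> range (u s)"
    by auto
  then have "bounded (range (u s \<circ> \<rho>1))"
    using insert.prems(2) bounded_subset by blast
  then obtain L \<rho>2 where \<rho>2: "strict_mono \<rho>2" "(u s \<circ> \<rho>1 \<circ> \<rho>2) \<longlonglongrightarrow> L"
    using bounded_imp_convergent_subsequence by blast
  have "convergent (u t \<circ> (\<rho>1 \<circ> \<rho>2))" if "t \<in> insert s S" for t
  proof (cases "t = s")
    case True
    then show ?thesis using \<rho>2(2) by (auto simp: convergent_def o_assoc)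
  next
    case False
    with that have "t \<in> S" by simp
    then obtain L' where "(u t \<circ> \<rho>1) \<longlonglongrightarrow> L'"
      using \<rho>1(2) by (auto simp: convergent_def)
    from LIMSEQ_subseq_LIMSEQ[OF this \<rho>2(1)] show ?thesis
      by (auto simp: convergent_def o_assoc)
  qed
  then show ?case
    using insert.prems(1) strict_mono_o[OF \<rho>1(1) \<rho>2(1)] by blast
qed

lemma LIMSEQ_between:
  fixes a b \<xi> :: "nat \<Rightarrow> real"
  assumes "a \<longlonglongrightarrow> p" "b \<longlonglongrightarrow> p" "\<And>m. \<xi> m \<in> {min (a m) (b m)..max (a m) (b m)}"
  shows "\<xi> \<longlonglongrightarrow> p"
proof (rule tendsto_sandwich)
  show "(\<lambda>m. min (a m) (b m)) \<longlonglongrightarrow> p" "(\<lambda>m. max (a m) (b m)) \<longlonglongrightarrow> p"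
    using tendsto_min[OF assms(1,2)] tendsto_max[OF assms(1,2)] by simp_all
qed (use assms(3) in auto)

locale interval_action = group G for G :: "('g, 'm) monoid_scheme" (structure) +
  fixes l r :: real and \<psi> :: "'g \<Rightarrow> real \<Rightarrow> real"
  assumes interval: "l < r" and hom: "\<psi> \<in> hom G (Diff2_plus l r)"
begin

lemma diff2_plus_act: "g \<in> carrier G \<Longrightarrow> diff2_plus l r (\<psi> g)"
  using hom unfolding hom_def Diff2_plus_def by auto

lemma act_mult: "g \<in> carrier G \<Longrightarrow> h \<in> carrier G \<Longrightarrow> \<psi> (g \<otimes> h) = \<psi> g \<circ> \<psi> h"
  using hom unfolding hom_def Diff2_plus_def by auto

lemma act_one: "\<psi> \<one> = id"
proof
  fix x
  have "\<psi> \<one> (\<psi> \<one> x) = \<psi> \<one> x"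
    using act_mult[of \<one> \<one>] by (metis comp_apply one_closed r_one)
  then show "\<psi> \<one> x = id x"
    using diff2_plus_inj[OF diff2_plus_act] by (simp add: inj_eq)
qed

lemma act_inv_left: "g \<in> carrier G \<Longrightarrow> \<psi> (inv g) (\<psi> g x) = x"
  using act_mult[of "inv g" g] act_one by (metis comp_apply id_apply inv_closed l_inv)

lemma act_inv_right: "g \<in> carrier G \<Longrightarrow> \<psi> g (\<psi> (inv g) x) = x"
  using act_mult[of g "inv g"] act_one by (metis comp_apply id_apply inv_closed r_inv)

lemma act_in_interval: "g \<in> carrier G \<Longrightarrow> x \<in> {l..r} \<Longrightarrow> \<psi> g x \<in> {l..r}"
  using diff2_plus_image[OF diff2_plus_act] by blast

lemma continuous_on_act: "g \<in> carrier G \<Longrightarrow> continuous_on {l..r} (\<psi> g)"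
  using diff2_plus_continuous_on[OF interval diff2_plus_act] .

definition act_deriv :: "'g \<Rightarrow> real \<Rightarrow> real" where
  "act_deriv g = interval_deriv l r (\<psi> g)"

lemma act_deriv_mult:
  "g \<in> carrier G \<Longrightarrow> h \<in> carrier G \<Longrightarrow> x \<in> {l..r} \<Longrightarrow>
    act_deriv (g \<otimes> h) x = act_deriv g (\<psi> h x) * act_deriv h x"
  unfolding act_deriv_def using interval_deriv_comp[OF interval diff2_plus_act diff2_plus_act] act_mult
  by simp

lemma act_deriv_one: "x \<in> {l..r} \<Longrightarrow> act_deriv \<one> x = 1"
  unfolding act_deriv_def act_one using interval_deriv_id[OF interval] .

lemma act_deriv_nonzero: "g \<in> carrier G \<Longrightarrow> x \<in> {l..r} \<Longrightarrow> act_deriv g x \<noteq> 0"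
  using act_deriv_mult[of "inv g" g x] act_deriv_one[of x] by auto

lemma act_deriv_nonneg: "g \<in> carrier G \<Longrightarrow> x \<in> {l..r} \<Longrightarrow> 0 \<le> act_deriv g x"
  unfolding act_deriv_def using interval_deriv_nonneg[OF interval diff2_plus_act] .

lemma continuous_on_act_deriv: "g \<in> carrier G \<Longrightarrow> continuous_on {l..r} (act_deriv g)"
  unfolding act_deriv_def using continuous_on_interval_deriv[OF interval diff2_plus_act] .

lemma subgroup_stabilizer: "subgroup (stabilizer G \<psi> p) G"
proof (rule subgroupI)
  show "stabilizer G \<psi> p \<subseteq> carrier G" "stabilizer G \<psi> p \<noteq> {}"
    using act_one by (auto simp: stabilizer_def)
  show "inv g \<in> stabilizer G \<psi> p" if "g \<in> stabilizer G \<psi> p" for g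
    using that act_inv_left[of g p] by (auto simp: stabilizer_def)
  show "g \<otimes> h \<in> stabilizer G \<psi> p" if "g \<in> stabilizer G \<psi> p" "h \<in> stabilizer G \<psi> p" for g h
    using that act_mult by (auto simp: stabilizer_def)
qed

definition tangent_stabilizer :: "real \<Rightarrow> 'g set" where
  "tangent_stabilizer p = {g \<in> stabilizer G \<psi> p. act_deriv g p = 1}"

lemma subgroup_tangent_stabilizer:
  assumes "p \<in> {l..r}"
  shows "subgroup (tangent_stabilizer p) G"
proof (rule subgroupI)
  show "tangent_stabilizer p \<subseteq> carrier G"
    by (auto simp: tangent_stabilizer_def stabilizer_def)
  have "\<one> \<in> tangent_stabilizer p"
    using assms act_one act_deriv_one by (simp add: tangent_stabilizer_def stabilizer_def)
  then show "tangent_stabilizer p \<noteq> {}" by blast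
  show "inv g \<in> tangent_stabilizer p" if "g \<in> tangent_stabilizer p" for g
    using that assms act_inv_left[of g p] act_deriv_mult[of "inv g" g p] act_deriv_one[of p]
    by (auto simp: tangent_stabilizer_def stabilizer_def)
  show "g \<otimes> h \<in> tangent_stabilizer p" if "g \<in> tangent_stabilizer p" "h \<in> tangent_stabilizer p" for g h
    using that assms act_mult act_deriv_mult by (auto simp: tangent_stabilizer_def stabilizer_def)
qed

lemma act_mvt_along_sequence:
  assumes g: "g \<in> carrier G" and h: "h \<in> stabilizer G \<psi> p" and p: "p \<in> {l..r}"
    and y: "y \<longlonglongrightarrow> p" "\<And>m. y m \<in> {l..r}"
  obtains \<xi> where "\<And>m. \<xi> m \<in> {l..r}" "(\<lambda>m. act_deriv g (\<xi> m)) \<longlonglongrightarrow> act_deriv g p"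
    and "\<And>m. \<psi> g (\<psi> h (y m)) - \<psi> g (y m) = act_deriv g (\<xi> m) * (\<psi> h (y m) - y m)"
proof -
  have hc: "h \<in> carrier G" and hp: "\<psi> h p = p"
    using h by (auto simp: stabilizer_def)
  define w where "w m = \<psi> h (y m)" for m
  have w: "w m \<in> {l..r}" for m
    using act_in_interval[OF hc y(2)] by (simp add: w_def)
  have "w \<longlonglongrightarrow> p"
    using continuous_on_tendsto_compose[OF continuous_on_act[OF hc] y(1) p] y(2) hp
    by (simp add: w_def[abs_def])
  have "\<forall>m. \<exists>\<xi>\<in>{min (y m) (w m)..max (y m) (w m)}.
      \<psi> g (w m) - \<psi> g (y m) = act_deriv g \<xi> * (w m - y m)"
    using interval_deriv_mvt[OF interval diff2_plus_act[OF g] y(2) w] by (simp add: act_deriv_def)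
  then obtain \<xi> where \<xi>: "\<And>m. \<xi> m \<in> {min (y m) (w m)..max (y m) (w m)}"
    and mvt: "\<And>m. \<psi> g (w m) - \<psi> g (y m) = act_deriv g (\<xi> m) * (w m - y m)"
    by metis
  have \<xi>_in: "\<xi> m \<in> {l..r}" for m
    using \<xi>[of m] y(2)[of m] w[of m] by auto
  have "\<xi> \<longlonglongrightarrow> p"
    using LIMSEQ_between[OF y(1) \<open>w \<longlonglongrightarrow> p\<close> \<xi>] .
  then have "(\<lambda>m. act_deriv g (\<xi> m)) \<longlonglongrightarrow> act_deriv g p"
    using continuous_on_tendsto_compose[OF continuous_on_act_deriv[OF g] \<open>\<xi> \<longlonglongrightarrow> p\<close> p] \<xi>_in
    by simp
  moreover have "\<psi> g (\<psi> h (y m)) - \<psi> g (y m) = act_deriv g (\<xi> m) * (\<psi> h (y m) - y m)" for m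
    using mvt[of m] by (simp add: w_def)
  ultimately show thesis
    using that \<xi>_in by blast
qed

definition scaled_displacement :: "(nat \<Rightarrow> real) \<Rightarrow> (nat \<Rightarrow> real) \<Rightarrow> 'g \<Rightarrow> nat \<Rightarrow> real" where
  "scaled_displacement y N g m = (\<psi> g (y m) - y m) / N m"

context
  fixes p :: real and y N :: "nat \<Rightarrow> real"
  assumes p: "p \<in> {l..r}" and y: "y \<longlonglongrightarrow> p" "\<And>m. y m \<in> {l..r}"
begin

lemma scaled_displacement_mult:
  assumes g: "g \<in> tangent_stabilizer p" and h: "h \<in> stabilizer G \<psi> p"
    and a: "scaled_displacement y N g \<longlonglongrightarrow> a" and b: "scaled_displacement y N h \<longlonglongrightarrow> b"
  shows "scaled_displacement y N (g \<otimes> h) \<longlonglongrightarrow> a + b"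
proof -
  have gc: "g \<in> carrier G" and hc: "h \<in> carrier G" and "act_deriv g p = 1"
    using g h by (auto simp: tangent_stabilizer_def stabilizer_def)
  obtain \<xi> where D: "(\<lambda>m. act_deriv g (\<xi> m)) \<longlonglongrightarrow> 1"
    and mvt: "\<And>m. \<psi> g (\<psi> h (y m)) - \<psi> g (y m) = act_deriv g (\<xi> m) * (\<psi> h (y m) - y m)"
    using act_mvt_along_sequence[OF gc h p y] \<open>act_deriv g p = 1\<close> by metis
  have "scaled_displacement y N (g \<otimes> h) =
      (\<lambda>m. scaled_displacement y N g m + act_deriv g (\<xi> m) * scaled_displacement y N h m)"
  proof
    fix m
    have "\<psi> (g \<otimes> h) (y m) - y m = (\<psi> g (y m) - y m) + act_deriv g (\<xi> m) * (\<psi> h (y m) - y m)"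
      using act_mult[OF gc hc] mvt[of m] by simp
    then show "scaled_displacement y N (g \<otimes> h) m =
        scaled_displacement y N g m + act_deriv g (\<xi> m) * scaled_displacement y N h m"
      unfolding scaled_displacement_def by (simp only: add_divide_distrib times_divide_eq_right)
  qed
  moreover have "(\<lambda>m. scaled_displacement y N g m + act_deriv g (\<xi> m) * scaled_displacement y N h m)
      \<longlonglongrightarrow> a + 1 * b"
    by (intro tendsto_intros a b D)
  ultimately show ?thesis by simp
qed

lemma scaled_displacement_inv:
  assumes s: "s \<in> tangent_stabilizer p" and a: "scaled_displacement y N s \<longlonglongrightarrow> a"
  shows "scaled_displacement y N (inv s) \<longlonglongrightarrow> - a"
proof -
  have sc: "s \<in> carrier G" and "act_deriv s p = 1"
    using s by (auto simp: tangent_stabilizer_def stabilizer_def)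
  have "inv s \<in> stabilizer G \<psi> p"
    using s subgroup.m_inv_closed[OF subgroup_stabilizer] by (auto simp: tangent_stabilizer_def)
  then obtain \<xi> where \<xi>: "\<And>m. \<xi> m \<in> {l..r}" and D: "(\<lambda>m. act_deriv s (\<xi> m)) \<longlonglongrightarrow> 1"
    and mvt: "\<And>m. \<psi> s (\<psi> (inv s) (y m)) - \<psi> s (y m) = act_deriv s (\<xi> m) * (\<psi> (inv s) (y m) - y m)"
    using act_mvt_along_sequence[OF sc _ p y] \<open>act_deriv s p = 1\<close> by metis
  have "scaled_displacement y N (inv s) = (\<lambda>m. - scaled_displacement y N s m / act_deriv s (\<xi> m))"
  proof
    fix m
    have "y m - \<psi> s (y m) = act_deriv s (\<xi> m) * (\<psi> (inv s) (y m) - y m)"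
      using mvt[of m] act_inv_right[OF sc] by simp
    then have "\<psi> (inv s) (y m) - y m = - (\<psi> s (y m) - y m) / act_deriv s (\<xi> m)"
      using act_deriv_nonzero[OF sc \<xi>] by (simp add: field_simps)
    then show "scaled_displacement y N (inv s) m = - scaled_displacement y N s m / act_deriv s (\<xi> m)"
      unfolding scaled_displacement_def by (simp add: divide_divide_eq_left mult.commute minus_divide_left)
  qed
  moreover have "(\<lambda>m. - scaled_displacement y N s m / act_deriv s (\<xi> m)) \<longlonglongrightarrow> - a / 1"
    by (intro tendsto_intros a D) simp
  ultimately show ?thesis by simp
qed

lemma subgroup_convergent_scaled_displacement:
  "subgroup {g \<in> tangent_stabilizer p. convergent (scaled_displacement y N g)} G"
proof (rule subgroupI)
  have T: "subgroup (tangent_stabilizer p) G"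
    using subgroup_tangent_stabilizer[OF p] .
  have "tangent_stabilizer p \<subseteq> stabilizer G \<psi> p"
    by (auto simp: tangent_stabilizer_def)
  note T_stab = subsetD[OF this]
  show "{g \<in> tangent_stabilizer p. convergent (scaled_displacement y N g)} \<subseteq> carrier G"
    using subgroup.subset[OF T] by blast
  have "scaled_displacement y N \<one> = (\<lambda>m. 0)"
    by (simp add: scaled_displacement_def act_one fun_eq_iff)
  then show "{g \<in> tangent_stabilizer p. convergent (scaled_displacement y N g)} \<noteq> {}"
    using subgroup.one_closed[OF T] convergent_const by fastforce
  show "inv g \<in> {g \<in> tangent_stabilizer p. convergent (scaled_displacement y N g)}"
    if "g \<in> {g \<in> tangent_stabilizer p. convergent (scaled_displacement y N g)}" for g
    using that subgroup.m_inv_closed[OF T] scaled_displacement_inv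
    by (auto simp: convergent_def)
  show "g \<otimes> h \<in> {g \<in> tangent_stabilizer p. convergent (scaled_displacement y N g)}"
    if g: "g \<in> {g \<in> tangent_stabilizer p. convergent (scaled_displacement y N g)}"
      and h: "h \<in> {g \<in> tangent_stabilizer p. convergent (scaled_displacement y N g)}" for g h
  proof -
    obtain a b where "scaled_displacement y N g \<longlonglongrightarrow> a" "scaled_displacement y N h \<longlonglongrightarrow> b"
      using g h by (auto simp: convergent_def)
    then have "scaled_displacement y N (g \<otimes> h) \<longlonglongrightarrow> a + b"
      using scaled_displacement_mult g h T_stab by blast
    then show ?thesis
      using g h subgroup.m_closed[OF T] by (auto simp: convergent_def)
  qed
qed

end

end

section \<open>Thurston stability\<close>

definition real_homs_trivial :: "('g, 'm) monoid_scheme \<Rightarrow> 'g set \<Rightarrow> bool" where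
  "real_homs_trivial G S \<longleftrightarrow>
     (\<forall>\<Phi> :: 'g \<Rightarrow> real. (\<forall>g\<in>generate G S. \<forall>h\<in>generate G S. \<Phi> (g \<otimes>\<^bsub>G\<^esub> h) = \<Phi> g + \<Phi> h)
        \<longrightarrow> (\<forall>s\<in>S. \<Phi> s = 0))"

lemma real_homs_trivialD:
  fixes \<Phi> :: "'g \<Rightarrow> real"
  assumes "real_homs_trivial G S"
    and "\<And>g h. g \<in> generate G S \<Longrightarrow> h \<in> generate G S \<Longrightarrow> \<Phi> (g \<otimes>\<^bsub>G\<^esub> h) = \<Phi> g + \<Phi> h"
    and "s \<in> S"
  shows "\<Phi> s = 0"
proof -
  have "(\<forall>g\<in>generate G S. \<forall>h\<in>generate G S. \<Phi> (g \<otimes>\<^bsub>G\<^esub> h) = \<Phi> g + \<Phi> h) \<longrightarrow> (\<forall>s\<in>S. \<Phi> s = 0)"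
    using assms(1) unfolding real_homs_trivial_def by (rule spec)
  then show ?thesis
    using assms(2,3) by blast
qed

context interval_action
begin

lemma last_common_fixed_point:
  assumes S: "S \<subseteq> carrier G" and q: "q \<in> {l..r}" and moved: "s0 \<in> S" "\<psi> s0 q \<noteq> q"
  obtains p where "l \<le> p" "p < q" "S \<subseteq> stabilizer G \<psi> p"
    and "\<And>x. p < x \<Longrightarrow> x \<le> q \<Longrightarrow> \<exists>s\<in>S. \<psi> s x \<noteq> x"
proof -
  define Z where "Z = {x \<in> {l..q}. \<forall>s\<in>S. \<psi> s x = x}"
  have "Z = {l..q} \<inter> (\<Inter>s\<in>S. {x \<in> {l..r}. \<psi> s x - x = 0})"
    using q by (auto simp: Z_def)
  moreover have "closed {x \<in> {l..r}. \<psi> s x - x = 0}" if "s \<in> S" for s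
    using that S continuous_on_act
    by (intro continuous_closed_preimage_constant continuous_intros) auto
  ultimately have "closed Z" by auto
  moreover have "l \<in> Z"
    using q S diff2_plus_fixes_left[OF diff2_plus_act] interval by (auto simp: Z_def)
  moreover have "bdd_above Z"
    by (auto simp: Z_def bdd_above_def)
  ultimately have "Sup Z \<in> Z"
    using closed_contains_Sup by blast
  moreover have "q \<notin> Z"
    using moved by (auto simp: Z_def)
  moreover have "x \<notin> Z" if "Sup Z < x" for x
    using cSup_upper[OF _ \<open>bdd_above Z\<close>] that by fastforce
  ultimately show thesis
    using that[of "Sup Z"] S by (fastforce simp: Z_def stabilizer_def)
qed

lemma generate_subset_tangent_stabilizer:
  assumes trivial: "real_homs_trivial G S" and S: "S \<subseteq> stabilizer G \<psi> p" and p: "p \<in> {l..r}"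
  shows "generate G S \<subseteq> tangent_stabilizer p"
proof -
  have stab: "generate G S \<subseteq> stabilizer G \<psi> p"
    using generate_subgroup_incl[OF S subgroup_stabilizer] .
  have "ln \<bar>act_deriv (g \<otimes> h) p\<bar> = ln \<bar>act_deriv g p\<bar> + ln \<bar>act_deriv h p\<bar>"
    if "g \<in> generate G S" "h \<in> generate G S" for g h
  proof -
    have gh: "g \<in> carrier G" "h \<in> carrier G" "\<psi> h p = p"
      using that stab by (auto simp: stabilizer_def)
    then have "act_deriv (g \<otimes> h) p = act_deriv g p * act_deriv h p"
      using act_deriv_mult p by simp
    then show ?thesis
      using act_deriv_nonzero gh p by (simp add: abs_mult ln_mult)
  qed
  then have ln0: "ln \<bar>act_deriv s p\<bar> = 0" if "s \<in> S" for s
    using real_homs_trivialD[OF trivial _ that, where \<Phi> = "\<lambda>g. ln \<bar>act_deriv g p\<bar>"] by simp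
  have "S \<subseteq> tangent_stabilizer p"
  proof
    fix s assume s: "s \<in> S"
    then have "s \<in> carrier G" "\<psi> s p = p"
      using S by (auto simp: stabilizer_def)
    then have "act_deriv s p \<noteq> 0" "0 \<le> act_deriv s p"
      using p act_deriv_nonzero act_deriv_nonneg by auto
    then have "act_deriv s p = 1"
      using ln0[OF s] by simp
    then show "s \<in> tangent_stabilizer p"
      using S s by (auto simp: tangent_stabilizer_def)
  qed
  then show ?thesis
    using generate_subgroup_incl[OF _ subgroup_tangent_stabilizer[OF p]] by blast
qed

lemma sequence_with_convergent_scaled_displacements:
  assumes "finite S" and p: "l \<le> p" "p < q" "q \<le> r"
    and moved: "\<And>x. p < x \<Longrightarrow> x \<le> q \<Longrightarrow> \<exists>s\<in>S. \<psi> s x \<noteq> x"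
  obtains y N where "y \<longlonglongrightarrow> p" "\<And>m. y m \<in> {l..r}"
    and "\<And>m. (\<Sum>s\<in>S. \<bar>scaled_displacement y N s m\<bar>) = 1"
    and "\<And>s. s \<in> S \<Longrightarrow> convergent (scaled_displacement y N s)"
proof -
  define x where "x m = p + (q - p) / Suc m" for m
  have x_in: "p < x m \<and> x m \<le> q" for m
  proof -
    have "(q - p) / Suc m \<le> (q - p) / 1"
      using p by (intro divide_left_mono) auto
    then show ?thesis
      using p by (simp add: x_def)
  qed
  have "(\<lambda>m. p + (q - p) * inverse (Suc m)) \<longlonglongrightarrow> p + (q - p) * 0"
    by (intro tendsto_intros LIMSEQ_inverse_real_of_nat)
  then have "x \<longlonglongrightarrow> p"
    by (simp add: x_def[abs_def] divide_inverse)
  define M where "M m = (\<Sum>s\<in>S. \<bar>\<psi> s (x m) - x m\<bar>)" for m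
  have M_ge: "\<bar>\<psi> s (x m) - x m\<bar> \<le> M m" if "s \<in> S" for s m
    unfolding M_def using \<open>finite S\<close> that by (intro member_le_sum) auto
  have M_pos: "0 < M m" for m
  proof -
    obtain s where "s \<in> S" "\<psi> s (x m) \<noteq> x m"
      using moved x_in by blast
    then show ?thesis
      using M_ge[of s m] by linarith
  qed
  have "bounded (range (scaled_displacement x M s))" if "s \<in> S" for s
  proof -
    have "\<bar>scaled_displacement x M s m\<bar> \<le> 1" for m
      using M_ge[OF that, of m] M_pos[of m]
      by (simp add: scaled_displacement_def abs_divide divide_le_eq_1_pos)
    then show ?thesis
      by (auto simp: bounded_real intro!: exI[of _ 1])
  qed
  then obtain \<rho> where \<rho>: "strict_mono \<rho>" "\<And>s. s \<in> S \<Longrightarrow> convergent (scaled_displacement x M s \<circ> \<rho>)"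
    using finite_family_convergent_subseq[OF \<open>finite S\<close>] by blast
  show thesis
  proof (rule that[of "x \<circ> \<rho>" "M \<circ> \<rho>"])
    show "(x \<circ> \<rho>) \<longlonglongrightarrow> p"
      using LIMSEQ_subseq_LIMSEQ[OF \<open>x \<longlonglongrightarrow> p\<close> \<rho>(1)] .
    show "(x \<circ> \<rho>) m \<in> {l..r}" for m
      using x_in[of "\<rho> m"] p by simp
    show "(\<Sum>s\<in>S. \<bar>scaled_displacement (x \<circ> \<rho>) (M \<circ> \<rho>) s m\<bar>) = 1" for m
      using M_pos[of "\<rho> m"]
      by (simp add: scaled_displacement_def abs_divide M_def flip: sum_divide_distrib)
    show "convergent (scaled_displacement (x \<circ> \<rho>) (M \<circ> \<rho>) s)" if "s \<in> S" for s
    proof -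
      have "scaled_displacement (x \<circ> \<rho>) (M \<circ> \<rho>) s = scaled_displacement x M s \<circ> \<rho>"
        by (simp add: fun_eq_iff scaled_displacement_def)
      then show ?thesis
        using \<rho>(2)[OF that] by simp
    qed
  qed
qed

lemma not_real_homs_trivial_near_last_fixed_point:
  assumes "finite S" "generate G S \<subseteq> tangent_stabilizer p" "l \<le> p" "p < q" "q \<le> r"
    and "\<And>x. p < x \<Longrightarrow> x \<le> q \<Longrightarrow> \<exists>s\<in>S. \<psi> s x \<noteq> x"
  shows "\<not> real_homs_trivial G S"
proof
  assume trivial: "real_homs_trivial G S"
  obtain y N where y: "y \<longlonglongrightarrow> p" "\<And>m. y m \<in> {l..r}"
    and normalized: "\<And>m. (\<Sum>s\<in>S. \<bar>scaled_displacement y N s m\<bar>) = 1"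
    and conv: "\<And>s. s \<in> S \<Longrightarrow> convergent (scaled_displacement y N s)"
    by (metis sequence_with_convergent_scaled_displacements[OF assms(1,3,4,5,6)])
  have p: "p \<in> {l..r}"
    using assms(3-5) by simp
  define H where "H = {g \<in> tangent_stabilizer p. convergent (scaled_displacement y N g)}"
  have "S \<subseteq> H"
  proof
    fix s assume "s \<in> S"
    then have "s \<in> tangent_stabilizer p"
      using assms(2) generate.incl[of s S G] by blast
    with conv[OF \<open>s \<in> S\<close>] show "s \<in> H"
      by (simp add: H_def)
  qed
  moreover have "subgroup H G"
    unfolding H_def by (rule subgroup_convergent_scaled_displacement[OF p y])
  ultimately have gen: "generate G S \<subseteq> H"
    by (rule generate_subgroup_incl)
  have lim_add: "lim (scaled_displacement y N (g \<otimes> h)) =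
      lim (scaled_displacement y N g) + lim (scaled_displacement y N h)" if "g \<in> H" "h \<in> H" for g h
  proof (rule limI, rule scaled_displacement_mult[OF p y])
    show "g \<in> tangent_stabilizer p" "h \<in> stabilizer G \<psi> p"
      using that by (auto simp: H_def tangent_stabilizer_def)
    show "scaled_displacement y N g \<longlonglongrightarrow> lim (scaled_displacement y N g)"
      "scaled_displacement y N h \<longlonglongrightarrow> lim (scaled_displacement y N h)"
      using that by (simp_all add: H_def convergent_LIMSEQ_iff)
  qed
  have to_zero: "scaled_displacement y N s \<longlonglongrightarrow> 0" if "s \<in> S" for s
  proof -
    have "lim (scaled_displacement y N s) = 0"
      using real_homs_trivialD[OF trivial _ that, where \<Phi> = "\<lambda>g. lim (scaled_displacement y N g)"]
        lim_add gen by blast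
    then show ?thesis
      using conv[OF that] by (simp add: convergent_LIMSEQ_iff)
  qed
  have "(\<lambda>m. \<Sum>s\<in>S. \<bar>scaled_displacement y N s m\<bar>) \<longlonglongrightarrow> (\<Sum>s\<in>S. 0)"
    by (intro tendsto_sum tendsto_rabs_zero to_zero)
  then show False
    using normalized by (simp add: LIMSEQ_const_iff)
qed

theorem thurston_stability:
  assumes "finite S" "S \<subseteq> carrier G" "real_homs_trivial G S" "s \<in> S"
  shows "\<psi> s = id"
proof (rule ccontr)
  assume "\<psi> s \<noteq> id"
  then obtain q where moved: "\<psi> s q \<noteq> q"
    by (auto simp: fun_eq_iff)
  then have q: "q \<in> {l..r}"
    using diff2_plus_fixes_outside[OF diff2_plus_act] assms(2,4) by blast
  obtain p where p: "l \<le> p" "p < q" "S \<subseteq> stabilizer G \<psi> p"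
    and near: "\<And>x. p < x \<Longrightarrow> x \<le> q \<Longrightarrow> \<exists>s\<in>S. \<psi> s x \<noteq> x"
    using last_common_fixed_point[OF assms(2) q assms(4) moved] by blast
  have "generate G S \<subseteq> tangent_stabilizer p"
    using generate_subset_tangent_stabilizer[OF assms(3) p(3)] p q by simp
  then show False
    using not_real_homs_trivial_near_last_fixed_point[OF assms(1) _ p(1,2) _ near] q assms(3) by simp
qed

end

section \<open>Braid relations\<close>

context group
begin

lemma commute_inv:
  assumes "x \<in> carrier G" "z \<in> carrier G" "x \<otimes> z = z \<otimes> x"
  shows "x \<otimes> inv z = inv z \<otimes> x"
proof -
  have "z \<otimes> (x \<otimes> inv z) = x \<otimes> z \<otimes> inv z"
    using assms by (simp add: m_assoc[symmetric])
  also have "\<dots> = x"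
    using assms(1,2) by (simp add: m_assoc)
  finally have "x = z \<otimes> (x \<otimes> inv z)" ..
  then show ?thesis
    using assms inv_solve_left by (metis inv_closed m_closed)
qed

lemma braid_mult_inv_commuting:
  assumes c: "x \<in> carrier G" "y \<in> carrier G" "z \<in> carrier G"
    and braid: "x \<otimes> y \<otimes> x = y \<otimes> x \<otimes> y" and "x \<otimes> z = z \<otimes> x" "y \<otimes> z = z \<otimes> y"
  shows "(x \<otimes> inv z) \<otimes> (y \<otimes> inv z) \<otimes> (x \<otimes> inv z) = (y \<otimes> inv z) \<otimes> (x \<otimes> inv z) \<otimes> (y \<otimes> inv z)"
proof -
  have w: "inv z \<in> carrier G"
    using c by simp
  have xw: "x \<otimes> (inv z \<otimes> t) = inv z \<otimes> (x \<otimes> t)" if "t \<in> carrier G" for t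
    using commute_inv[of x z] assms that by (simp flip: m_assoc)
  have yw: "y \<otimes> (inv z \<otimes> t) = inv z \<otimes> (y \<otimes> t)" if "t \<in> carrier G" for t
    using commute_inv[of y z] assms that by (simp flip: m_assoc)
  have xyx: "x \<otimes> (y \<otimes> (x \<otimes> t)) = y \<otimes> (x \<otimes> (y \<otimes> t))" if "t \<in> carrier G" for t
    using braid c that by (simp add: m_assoc[symmetric])
  show ?thesis
    using c w by (simp add: m_assoc xw yw xyx)
qed

lemma additive_eq_if_braided:
  fixes \<Phi> :: "'a \<Rightarrow> 'c::cancel_ab_semigroup_add"
  assumes "subgroup K G" and add: "\<And>g h. g \<in> K \<Longrightarrow> h \<in> K \<Longrightarrow> \<Phi> (g \<otimes> h) = \<Phi> g + \<Phi> h"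
    and K: "g \<in> K" "h \<in> K" and braid: "g \<otimes> h \<otimes> g = h \<otimes> g \<otimes> h"
  shows "\<Phi> g = \<Phi> h"
proof -
  have "g \<otimes> h \<in> K" "h \<otimes> g \<in> K"
    using K subgroup.m_closed[OF \<open>subgroup K G\<close>] by auto
  then have "\<Phi> g + \<Phi> h + \<Phi> g = \<Phi> h + \<Phi> g + \<Phi> h"
    using braid add K by metis
  then have "(\<Phi> g + \<Phi> h) + \<Phi> g = (\<Phi> g + \<Phi> h) + \<Phi> h"
    by (simp add: add.commute)
  then show ?thesis
    by simp
qed

end

definition A5_chain :: "('g, 'm) monoid_scheme \<Rightarrow> 'g \<Rightarrow> 'g \<Rightarrow> 'g \<Rightarrow> 'g \<Rightarrow> 'g \<Rightarrow> bool" where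
  "A5_chain G x1 x2 x3 x4 x5 \<longleftrightarrow> {x1, x2, x3, x4, x5} \<subseteq> carrier G \<and>
     x1 \<otimes>\<^bsub>G\<^esub> x2 \<otimes>\<^bsub>G\<^esub> x1 = x2 \<otimes>\<^bsub>G\<^esub> x1 \<otimes>\<^bsub>G\<^esub> x2 \<and> x2 \<otimes>\<^bsub>G\<^esub> x3 \<otimes>\<^bsub>G\<^esub> x2 = x3 \<otimes>\<^bsub>G\<^esub> x2 \<otimes>\<^bsub>G\<^esub> x3 \<and>
     x3 \<otimes>\<^bsub>G\<^esub> x4 \<otimes>\<^bsub>G\<^esub> x3 = x4 \<otimes>\<^bsub>G\<^esub> x3 \<otimes>\<^bsub>G\<^esub> x4 \<and> x4 \<otimes>\<^bsub>G\<^esub> x5 \<otimes>\<^bsub>G\<^esub> x4 = x5 \<otimes>\<^bsub>G\<^esub> x4 \<otimes>\<^bsub>G\<^esub> x5 \<and>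
     x1 \<otimes>\<^bsub>G\<^esub> x3 = x3 \<otimes>\<^bsub>G\<^esub> x1 \<and> x1 \<otimes>\<^bsub>G\<^esub> x4 = x4 \<otimes>\<^bsub>G\<^esub> x1 \<and> x1 \<otimes>\<^bsub>G\<^esub> x5 = x5 \<otimes>\<^bsub>G\<^esub> x1 \<and>
     x2 \<otimes>\<^bsub>G\<^esub> x4 = x4 \<otimes>\<^bsub>G\<^esub> x2 \<and> x2 \<otimes>\<^bsub>G\<^esub> x5 = x5 \<otimes>\<^bsub>G\<^esub> x2 \<and> x3 \<otimes>\<^bsub>G\<^esub> x5 = x5 \<otimes>\<^bsub>G\<^esub> x3"

lemma (in group) real_homs_trivial_A5_chain_ratios:
  assumes chain: "A5_chain G x1 x2 x3 x4 x5"
  defines "E \<equiv> {x1, x2, x3, x4, x5}"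
  shows "real_homs_trivial G {u \<otimes> inv v |u v. u \<in> E \<and> v \<in> E}"
proof -
  define S where "S = {u \<otimes> inv v |u v. u \<in> E \<and> v \<in> E}"
  have E_sub: "E \<subseteq> carrier G"
    using chain unfolding A5_chain_def E_def by simp
  have K: "subgroup (generate G S) G"
    using E_sub by (intro generate_is_subgroup) (auto simp: S_def)
  have ratio_in: "u \<otimes> inv v \<in> generate G S" if "u \<in> E" "v \<in> E" for u v
    using that by (auto simp: S_def intro: generate.incl)
  have rels: "x1 \<otimes> x2 \<otimes> x1 = x2 \<otimes> x1 \<otimes> x2" "x2 \<otimes> x3 \<otimes> x2 = x3 \<otimes> x2 \<otimes> x3"
    "x3 \<otimes> x4 \<otimes> x3 = x4 \<otimes> x3 \<otimes> x4" "x4 \<otimes> x5 \<otimes> x4 = x5 \<otimes> x4 \<otimes> x5"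
    "x1 \<otimes> x3 = x3 \<otimes> x1" "x1 \<otimes> x4 = x4 \<otimes> x1" "x1 \<otimes> x5 = x5 \<otimes> x1"
    "x2 \<otimes> x4 = x4 \<otimes> x2" "x2 \<otimes> x5 = x5 \<otimes> x2" "x3 \<otimes> x5 = x5 \<otimes> x3"
    using chain unfolding A5_chain_def by auto
  have in_E: "x1 \<in> E" "x2 \<in> E" "x3 \<in> E" "x4 \<in> E" "x5 \<in> E"
    by (simp_all add: E_def)
  have "\<Phi> s = 0"
    if add: "\<And>g h. g \<in> generate G S \<Longrightarrow> h \<in> generate G S \<Longrightarrow> \<Phi> (g \<otimes> h) = \<Phi> g + \<Phi> h"
      and s: "s \<in> S" for \<Phi> :: "'a \<Rightarrow> real" and s
  proof -
    define \<phi> where "\<phi> u v = \<Phi> (u \<otimes> inv v)" for u v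
    have cocycle: "\<phi> u v + \<phi> v w = \<phi> u w" if "u \<in> E" "v \<in> E" "w \<in> E" for u v w
    proof -
      have carr: "u \<in> carrier G" "v \<in> carrier G" "w \<in> carrier G"
        using that E_sub by auto
      then have "u \<otimes> inv v \<otimes> (v \<otimes> inv w) = u \<otimes> (inv v \<otimes> v) \<otimes> inv w"
        by (simp only: m_assoc inv_closed m_closed)
      also have "\<dots> = u \<otimes> inv w"
        using carr by simp
      finally have "u \<otimes> inv v \<otimes> (v \<otimes> inv w) = u \<otimes> inv w" .
      then show ?thesis
        using add ratio_in that unfolding \<phi>_def by metis
    qed
    have vanish: "\<phi> u v = 0"
      if uvw: "u \<in> E" "v \<in> E" "w \<in> E"
        and rel: "u \<otimes> v \<otimes> u = v \<otimes> u \<otimes> v" "u \<otimes> w = w \<otimes> u" "v \<otimes> w = w \<otimes> v" for u v w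
    proof -
      have "\<phi> u w = \<phi> v w"
        unfolding \<phi>_def
      proof (rule additive_eq_if_braided[OF K add])
        show "u \<otimes> inv w \<in> generate G S" "v \<otimes> inv w \<in> generate G S"
          using ratio_in uvw by auto
        show "u \<otimes> inv w \<otimes> (v \<otimes> inv w) \<otimes> (u \<otimes> inv w) = v \<otimes> inv w \<otimes> (u \<otimes> inv w) \<otimes> (v \<otimes> inv w)"
          using braid_mult_inv_commuting rel uvw E_sub by blast
      qed
      then show ?thesis
        using cocycle[OF uvw(1,3,2)] cocycle[OF uvw(2,3,2)] cocycle[OF uvw(2,2,2)] by linarith
    qed
    have "\<phi> x1 x2 = 0" "\<phi> x2 x3 = 0" "\<phi> x3 x4 = 0" "\<phi> x4 x5 = 0"
      using vanish[OF in_E(1,2,4) rels(1,6,8)] vanish[OF in_E(2,3,5) rels(2,9,10)]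
        vanish[OF in_E(3,4,1) rels(3) rels(5,6)[symmetric]]
        vanish[OF in_E(4,5,1) rels(4) rels(6,7)[symmetric]]
      by simp_all
    then have to_x5: "\<phi> u x5 = 0" if "u \<in> E" for u
    proof -
      have "u = x1 \<or> u = x2 \<or> u = x3 \<or> u = x4 \<or> u = x5"
        using that by (simp add: E_def)
      then show ?thesis
        using \<open>\<phi> x4 x5 = 0\<close> \<open>\<phi> x3 x4 = 0\<close> \<open>\<phi> x2 x3 = 0\<close> \<open>\<phi> x1 x2 = 0\<close>
          cocycle[OF in_E(1,2,5)] cocycle[OF in_E(2,3,5)] cocycle[OF in_E(3,4,5)] cocycle[OF in_E(5,5,5)]
        by (elim disjE; hypsubst; linarith)
    qed
    obtain u v where uv: "u \<in> E" "v \<in> E" "s = u \<otimes> inv v"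
      using s by (auto simp: S_def)
    have "\<phi> u v = 0"
      using to_x5[OF uv(1)] to_x5[OF uv(2)] cocycle[OF uv(1) in_E(5) uv(2)]
        cocycle[OF in_E(5) uv(2) in_E(5)] cocycle[OF in_E(5,5,5)]
      by linarith
    then show ?thesis
      using uv(3) by (simp add: \<phi>_def)
  qed
  then show ?thesis
    unfolding real_homs_trivial_def S_def by blast
qed

section \<open>Groups of type MC(n)\<close>

lemma MC_A5_chain:
  assumes mc: "is_MC_generating G n a b c" and i: "1 \<le> i" "i < n"
  shows "A5_chain G (a i) (b i) (c i) (b (Suc i)) (a (Suc i))"
proof -
  have ac: "\<And>i. i \<in> {1..n} \<Longrightarrow> a i \<in> carrier G" and bc: "\<And>i. i \<in> {1..n} \<Longrightarrow> b i \<in> carrier G"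
    and cc: "\<And>i. i \<in> {1..n-1} \<Longrightarrow> c i \<in> carrier G"
    and aa: "\<And>i j. i \<in> {1..n} \<Longrightarrow> j \<in> {1..n} \<Longrightarrow> a i \<otimes>\<^bsub>G\<^esub> a j = a j \<otimes>\<^bsub>G\<^esub> a i"
    and bb: "\<And>i j. i \<in> {1..n} \<Longrightarrow> j \<in> {1..n} \<Longrightarrow> b i \<otimes>\<^bsub>G\<^esub> b j = b j \<otimes>\<^bsub>G\<^esub> b i"
    and ac_comm: "\<And>i j. i \<in> {1..n} \<Longrightarrow> j \<in> {1..n-1} \<Longrightarrow> a i \<otimes>\<^bsub>G\<^esub> c j = c j \<otimes>\<^bsub>G\<^esub> a i"
    and ab_comm: "\<And>i j. i \<in> {1..n} \<Longrightarrow> j \<in> {1..n} \<Longrightarrow> i \<noteq> j \<Longrightarrow> a i \<otimes>\<^bsub>G\<^esub> b j = b j \<otimes>\<^bsub>G\<^esub> a i"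
    and aba: "\<And>i. i \<in> {1..n} \<Longrightarrow> a i \<otimes>\<^bsub>G\<^esub> b i \<otimes>\<^bsub>G\<^esub> a i = b i \<otimes>\<^bsub>G\<^esub> a i \<otimes>\<^bsub>G\<^esub> b i"
    and bcb: "\<And>i j. i \<in> {1..n} \<Longrightarrow> j \<in> {1..n-1} \<Longrightarrow> j = i \<or> j = i - 1 \<Longrightarrow>
       b i \<otimes>\<^bsub>G\<^esub> c j \<otimes>\<^bsub>G\<^esub> b i = c j \<otimes>\<^bsub>G\<^esub> b i \<otimes>\<^bsub>G\<^esub> c j"
    using mc unfolding is_MC_generating_def by (auto simp: image_subset_iff)
  have I: "i \<in> {1..n}" "Suc i \<in> {1..n}" "i \<in> {1..n-1}"
    using i by auto
  show ?thesis
    unfolding A5_chain_def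
    using ac[OF I(1)] bc[OF I(1)] cc[OF I(3)] bc[OF I(2)] ac[OF I(2)]
      aba[OF I(1)] bcb[OF I(1,3)] bcb[OF I(2,3)] aba[OF I(2)]
      ac_comm[OF I(1,3)] ab_comm[OF I(1,2)] aa[OF I(1,2)] bb[OF I(1,2)] ab_comm[OF I(2,1)]
      ac_comm[OF I(2,3)]
    by simp
qed

context interval_action
begin

lemma A5_chain_act_eq:
  assumes chain: "A5_chain G x1 x2 x3 x4 x5"
    and u: "u \<in> {x1, x2, x3, x4, x5}" and v: "v \<in> {x1, x2, x3, x4, x5}"
  shows "\<psi> u = \<psi> v"
proof -
  define S where "S = {u \<otimes> inv v |u v. u \<in> {x1, x2, x3, x4, x5} \<and> v \<in> {x1, x2, x3, x4, x5}}"
  have E_sub: "{x1, x2, x3, x4, x5} \<subseteq> carrier G"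
    using chain unfolding A5_chain_def by simp
  then have uv: "u \<in> carrier G" "v \<in> carrier G"
    using u v by auto
  have "finite S"
    unfolding S_def by (rule finite_image_set2) simp_all
  moreover have "S \<subseteq> carrier G"
    using E_sub by (auto simp: S_def)
  moreover have "real_homs_trivial G S"
    unfolding S_def by (rule real_homs_trivial_A5_chain_ratios[OF chain])
  moreover have "u \<otimes> inv v \<in> S"
    using u v unfolding S_def by blast
  ultimately have "\<psi> (u \<otimes> inv v) = id"
    by (rule thurston_stability)
  moreover have "\<psi> u = \<psi> (u \<otimes> inv v) \<circ> \<psi> v"
    using uv act_mult[of "u \<otimes> inv v" v] by (simp add: m_assoc)
  ultimately show ?thesis
    by simp
qed

lemma MC_generators_act_eq:
  assumes mc: "is_MC_generating G n a b c" and "2 \<le> n"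
    and x: "x \<in> a ` {1..n} \<union> b ` {1..n} \<union> c ` {1..n-1}"
  shows "\<psi> x = \<psi> (a 1)"
proof -
  have chain_eq: "\<psi> (b i) = \<psi> (a i)" "\<psi> (c i) = \<psi> (a i)" "\<psi> (b (Suc i)) = \<psi> (a i)"
    "\<psi> (a (Suc i)) = \<psi> (a i)" if "1 \<le> i" "i < n" for i
  proof -
    note eq = A5_chain_act_eq[OF MC_A5_chain[OF mc that]]
    show "\<psi> (b i) = \<psi> (a i)" "\<psi> (c i) = \<psi> (a i)" "\<psi> (b (Suc i)) = \<psi> (a i)"
      "\<psi> (a (Suc i)) = \<psi> (a i)"
      using eq[of "b i" "a i"] eq[of "c i" "a i"] eq[of "b (Suc i)" "a i"] eq[of "a (Suc i)" "a i"]
      by simp_all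
  qed
  have a: "\<psi> (a i) = \<psi> (a 1)" if "1 \<le> i" "i \<le> n" for i
    using that
  proof (induction i)
    case (Suc i)
    then show ?case
      using chain_eq(4)[of i] by (cases "i = 0") simp_all
  qed simp
  have b: "\<psi> (b i) = \<psi> (a 1)" if "1 \<le> i" "i \<le> n" for i
  proof (cases "i < n")
    case True
    then show ?thesis
      using chain_eq(1)[OF that(1)] a[OF that] by simp
  next
    case False
    then have "i = Suc (n - 1)" "1 \<le> n - 1" "n - 1 < n"
      using that \<open>2 \<le> n\<close> by auto
    then show ?thesis
      using chain_eq(3)[of "n - 1"] a[of "n - 1"] by simp
  qed
  have c: "\<psi> (c i) = \<psi> (a 1)" if "1 \<le> i" "i \<le> n - 1" for i
    using chain_eq(2)[of i] a[of i] that by simp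
  from x consider (A) i where "i \<in> {1..n}" "x = a i" | (B) i where "i \<in> {1..n}" "x = b i"
    | (C) i where "i \<in> {1..n-1}" "x = c i"
    by blast
  then show ?thesis
  proof cases
    case (A i)
    then show ?thesis using a[of i] by simp
  next
    case (B i)
    then show ?thesis using b[of i] by simp
  next
    case (C i)
    then show ?thesis using c[of i] by simp
  qed
qed

lemma subgroup_act_commuting: "subgroup {g \<in> carrier G. \<psi> g \<circ> f = f \<circ> \<psi> g} G"
proof (rule subgroupI)
  show "{g \<in> carrier G. \<psi> g \<circ> f = f \<circ> \<psi> g} \<subseteq> carrier G"
    by blast
  show "{g \<in> carrier G. \<psi> g \<circ> f = f \<circ> \<psi> g} \<noteq> {}"
    using act_one by auto
  show "inv g \<in> {g \<in> carrier G. \<psi> g \<circ> f = f \<circ> \<psi> g}"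
    if "g \<in> {g \<in> carrier G. \<psi> g \<circ> f = f \<circ> \<psi> g}" for g
  proof -
    have g: "g \<in> carrier G" "\<And>x. \<psi> g (f x) = f (\<psi> g x)"
      using that by (auto simp: fun_eq_iff)
    have "\<psi> (inv g) (f x) = f (\<psi> (inv g) x)" for x
      using g act_inv_left[of g] act_inv_right[of g] by metis
    then show ?thesis
      using g by (auto simp: fun_eq_iff)
  qed
  show "g \<otimes> h \<in> {g \<in> carrier G. \<psi> g \<circ> f = f \<circ> \<psi> g}"
    if "g \<in> {g \<in> carrier G. \<psi> g \<circ> f = f \<circ> \<psi> g}" "h \<in> {g \<in> carrier G. \<psi> g \<circ> f = f \<circ> \<psi> g}"
    for g h
    using that by (auto simp: act_mult fun_eq_iff)
qed

lemma act_commute_from_generators: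
  assumes gen: "generate G E = carrier G" and E: "\<And>x. x \<in> E \<Longrightarrow> \<psi> x \<circ> f = f \<circ> \<psi> x"
    and g: "g \<in> carrier G"
  shows "\<psi> g \<circ> f = f \<circ> \<psi> g"
proof -
  have "E \<subseteq> {g \<in> carrier G. \<psi> g \<circ> f = f \<circ> \<psi> g}"
  proof
    fix x assume x: "x \<in> E"
    then have "x \<in> generate G E"
      by (rule generate.incl)
    then have "x \<in> carrier G"
      unfolding gen .
    with x E show "x \<in> {g \<in> carrier G. \<psi> g \<circ> f = f \<circ> \<psi> g}"
      by blast
  qed
  then have "generate G E \<subseteq> {g \<in> carrier G. \<psi> g \<circ> f = f \<circ> \<psi> g}"
    by (rule generate_subgroup_incl[OF _ subgroup_act_commuting])
  then show ?thesis
    using g unfolding gen by blast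
qed

lemma act_commute_if_constant_on_generators:
  assumes gen: "generate G E = carrier G" and const: "\<And>x. x \<in> E \<Longrightarrow> \<psi> x = f"
    and g: "g \<in> carrier G" and h: "h \<in> carrier G"
  shows "\<psi> g \<circ> \<psi> h = \<psi> h \<circ> \<psi> g"
proof -
  have h_comm: "\<psi> h \<circ> f = f \<circ> \<psi> h"
    by (rule act_commute_from_generators[OF gen _ h]) (simp add: const)
  show ?thesis
    by (rule act_commute_from_generators[OF gen _ g]) (simp add: const h_comm)
qed

end

theorem theorem3p11:
  fixes G :: "('g, 'm) monoid_scheme" and n :: nat and l r :: real and \<psi> :: "'g \<Rightarrow> real \<Rightarrow> real"
  assumes "n \<ge> 2" and "type_MC G n" and "l < r"
    and "\<psi> \<in> hom G (Diff2_plus l r)"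
  shows "\<forall>f\<in>\<psi> ` carrier G. \<forall>g\<in>\<psi> ` carrier G. f \<circ> g = g \<circ> f"
proof -
  obtain a b c where "group G" and mc: "is_MC_generating G n a b c"
    using assms(2) unfolding type_MC_def by blast
  then interpret interval_action G l r \<psi>
    using assms(3,4) by (simp add: interval_action_def interval_action_axioms_def)
  have "generate G (a ` {1..n} \<union> b ` {1..n} \<union> c ` {1..n-1}) = carrier G"
    using mc unfolding is_MC_generating_def by (elim conjE)
  note commute = act_commute_if_constant_on_generators[OF this MC_generators_act_eq[OF mc assms(1)]]
  show ?thesis
    using commute by blast
qed

end
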